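(* For every integer $n\ge2$, $\lambda(\mathbb{Z}/n\mathbb{Z})\le\frac1n\log\rho(n)$, where $\rho(n)$ is the smallest prime number that does not divide $n$.
   Context: For a compact abelian group $G$ with normalized Haar measure $\mu$ and (multiplicative) dual group of characters $\widehat{G}$, let $\mathbb{Z}[\widehat{G}]$ denote the ring of integral linear combinations of characters, regarded as functions on $G$. For $f\in\mathbb{Z}[\widehat{G}]$, the logarithmic Mahler measure over $G$ is $\mathsf{m}_G(f)=\int_G\log|f|\,d\mu$ (with $\log 0=-\infty$). The Lehmer constant of $G$ is $\lambda(G)=\inf\{\mathsf{m}_G(f): f\in\mathbb{Z}[\widehat{G}],\ \mathsf{m}_G(f)>0\}$. Here $\mathbb{Z}/n\mathbb{Z}$ is the finite cyclic group with the uniform probability measure; its characters are $\chi_k(j)=e^{2\pi i jk/n}$, $k=0,\dots,n-1$. *)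

theory Defs
  imports "HOL-Analysis.Analysis" "HOL-Computational_Algebra.Primes"
begin

definition zn_char :: "nat \<Rightarrow> nat \<Rightarrow> nat \<Rightarrow> complex" where
  "zn_char n k j = exp (2 * of_real pi * \<i> * of_nat j * of_nat k / of_nat n)"

text \<open>Element of Z[dual of Z/nZ] with integer coefficients c 0, ..., c (n-1),
  as a function on Z/nZ = {0..<n}.\<close>
definition zn_group_ring_fun :: "nat \<Rightarrow> (nat \<Rightarrow> int) \<Rightarrow> nat \<Rightarrow> complex" where
  "zn_group_ring_fun n c j = (\<Sum>k<n. of_int (c k) * zn_char n k j)"

definition mahler_Zn :: "nat \<Rightarrow> (nat \<Rightarrow> int) \<Rightarrow> ereal" where
  "mahler_Zn n c =
     (if \<exists>j<n. zn_group_ring_fun n c j = 0 then -\<infinity>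
      else ereal ((\<Sum>j<n. ln (cmod (zn_group_ring_fun n c j))) / real n))"

definition lehmer_Zn :: "nat \<Rightarrow> ereal" where
  "lehmer_Zn n = Inf {mahler_Zn n c | c. mahler_Zn n c > 0}"

definition rho :: "nat \<Rightarrow> nat" where
  "rho n = (LEAST p. prime p \<and> \<not> p dvd n)"

end

theory Submission
  imports Defs "HOL-Number_Theory.Cong"
begin

text \<open>Take \<open>f = \<chi>\<^sub>0 + \<dots> + \<chi>\<^sub>N\<^sub>-\<^sub>1\<close> with \<open>N \<ge> 2\<close> coprime to \<open>n\<close>. Writing \<open>\<zeta> = exp(2\<pi>i/n)\<close>, we have
  \<open>f(0) = N\<close> and \<open>f(j) = (1 - \<zeta>\<^sup>j\<^sup>N) / (1 - \<zeta>\<^sup>j)\<close> for \<open>j \<noteq> 0\<close>. Multiplication by \<open>N\<close> permutes the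
  nonzero residues mod \<open>n\<close>, so the numerators are a rearrangement of the denominators and the
  values of \<open>f\<close> multiply to \<open>N\<close>. Hence \<open>m(f) = log N / n > 0\<close>; the smallest prime not dividing \<open>n\<close>
  is an admissible \<open>N\<close>.\<close>

definition zn_root :: "nat \<Rightarrow> complex" where
  "zn_root n = exp (2 * of_real pi * \<i> / of_nat n)"

lemma zn_root_power: "zn_root n ^ m = exp (2 * of_real pi * \<i> * of_nat m / of_nat n)"
  unfolding zn_root_def by (simp add: exp_of_nat_mult [symmetric] mult_ac)

lemma zn_root_power_eq_1_iff:
  assumes "n > 0"
  shows "zn_root n ^ m = 1 \<longleftrightarrow> n dvd m"
  using complex_root_unity_eq_1 [of n m] assms by (simp add: zn_root_power)

lemma zn_root_power_mod:
  assumes "n > 0"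
  shows "zn_root n ^ (m mod n) = zn_root n ^ m"
proof -
  have "zn_root n ^ m = (zn_root n ^ n) ^ (m div n) * zn_root n ^ (m mod n)"
    by (metis div_mult_mod_eq mult.commute power_add power_mult)
  then show ?thesis
    using zn_root_power_eq_1_iff [OF assms, of n] by simp
qed

lemma zn_char_eq_zn_root_power: "zn_char n k j = zn_root n ^ (j * k)"
  by (simp add: zn_char_def zn_root_power mult_ac)

text \<open>Coefficients of \<open>1 + X + \<dots> + X\<^sup>N\<^sup>-\<^sup>1\<close> reduced modulo \<open>X\<^sup>n - 1\<close>, i.e. of
  \<open>\<chi>\<^sub>0 + \<dots> + \<chi>\<^sub>N\<^sub>-\<^sub>1\<close> where \<open>\<chi>\<^sub>m = \<chi>\<^bsub>m mod n\<^esub>\<close>.\<close>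
definition zn_geom_coeffs :: "nat \<Rightarrow> nat \<Rightarrow> nat \<Rightarrow> int" where
  "zn_geom_coeffs n N k = int (card {m \<in> {..<N}. m mod n = k})"

lemma zn_group_ring_fun_geom_coeffs:
  assumes "n > 0"
  shows "zn_group_ring_fun n (zn_geom_coeffs n N) j = (\<Sum>m<N. (zn_root n ^ j) ^ m)"
proof -
  let ?fibre = "\<lambda>k. {m \<in> {..<N}. m mod n = k}"
  have "zn_root n ^ (j * m) = zn_root n ^ (j * k)" if "m \<in> ?fibre k" for m k
    using that zn_root_power_mod [OF assms]
    by (metis (mono_tags, lifting) mem_Collect_eq mod_mult_right_eq)
  then have "zn_group_ring_fun n (zn_geom_coeffs n N) j =
      (\<Sum>k<n. \<Sum>m\<in>?fibre k. zn_root n ^ (j * m))"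
    by (simp add: zn_group_ring_fun_def zn_geom_coeffs_def zn_char_eq_zn_root_power)
  also have "\<dots> = (\<Sum>m<N. zn_root n ^ (j * m))"
    by (rule sum.group) (use assms in auto)
  finally show ?thesis
    by (simp add: power_mult)
qed

lemma zn_group_ring_fun_geom_coeffs_not_dvd:
  assumes "n > 0" and "\<not> n dvd j"
  shows "zn_group_ring_fun n (zn_geom_coeffs n N) j =
    (1 - zn_root n ^ (j * N mod n)) / (1 - zn_root n ^ j)"
proof -
  have "zn_root n ^ j \<noteq> 1"
    using assms by (simp add: zn_root_power_eq_1_iff)
  then have "(\<Sum>m<N. (zn_root n ^ j) ^ m) = (1 - (zn_root n ^ j) ^ N) / (1 - zn_root n ^ j)"
    by (simp add: sum_gp_strict)
  also have "(zn_root n ^ j) ^ N = zn_root n ^ (j * N mod n)"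
    by (simp add: zn_root_power_mod [OF assms(1)] power_mult)
  finally show ?thesis
    using assms(1) by (simp add: zn_group_ring_fun_geom_coeffs)
qed

lemma bij_betw_mult_mod_nat:
  fixes N n :: nat
  assumes "coprime N n"
  shows "bij_betw (\<lambda>j. j * N mod n) {1..<n} {1..<n}"
proof -
  have "inj_on (\<lambda>j. j * N mod n) {1..<n}"
  proof (rule inj_onI)
    fix a b assume "a \<in> {1..<n}" "b \<in> {1..<n}" "a * N mod n = b * N mod n"
    then show "a = b"
      by (metis atLeastLessThan_iff cong_def cong_less_modulus_unique_nat cong_mult_rcancel_nat [OF assms])
  qed
  moreover have "j * N mod n \<in> {1..<n}" if "j \<in> {1..<n}" for j
  proof -
    have "\<not> n dvd j * N"
      using that assms by (auto simp: coprime_commute coprime_dvd_mult_left_iff dest: dvd_imp_le)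
    then show ?thesis
      using that by (simp add: dvd_eq_mod_eq_0 Suc_le_eq)
  qed
  ultimately show ?thesis
    by (simp add: bij_betw_def endo_inj_surj image_subset_iff)
qed

lemma prod_zn_group_ring_fun_geom_coeffs:
  assumes "n > 0" and "coprime N n"
  shows "(\<Prod>j<n. zn_group_ring_fun n (zn_geom_coeffs n N) j) = of_nat N"
proof -
  let ?f = "zn_group_ring_fun n (zn_geom_coeffs n N)"
  let ?g = "\<lambda>j. 1 - zn_root n ^ j"
  have g_nonzero: "(\<Prod>j\<in>{1..<n}. ?g j) \<noteq> 0"
    using assms(1) by (auto simp: zn_root_power_eq_1_iff dest: dvd_imp_le)
  have "(\<Prod>j\<in>{1..<n}. ?f j) = (\<Prod>j\<in>{1..<n}. ?g (j * N mod n) / ?g j)"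
    using assms(1) by (intro prod.cong refl zn_group_ring_fun_geom_coeffs_not_dvd) (auto dest: dvd_imp_le)
  also have "\<dots> = (\<Prod>j\<in>{1..<n}. ?g (j * N mod n)) / (\<Prod>j\<in>{1..<n}. ?g j)"
    by (rule prod_dividef)
  also have "(\<Prod>j\<in>{1..<n}. ?g (j * N mod n)) = (\<Prod>j\<in>{1..<n}. ?g j)"
    using prod.reindex_bij_betw [OF bij_betw_mult_mod_nat [OF assms(2)], of ?g] by simp
  finally have "(\<Prod>j\<in>{1..<n}. ?f j) = 1"
    using g_nonzero by simp
  moreover have "?f 0 = of_nat N"
    using assms(1) by (simp add: zn_group_ring_fun_geom_coeffs)
  moreover have "{..<n} = insert 0 {1..<n}"
    using assms(1) by auto
  ultimately show ?thesis
    by simp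
qed

lemma mahler_Zn_eq_ln_norm_prod:
  assumes "(\<Prod>j<n. zn_group_ring_fun n c j) \<noteq> 0"
  shows "mahler_Zn n c = ereal (ln (norm (\<Prod>j<n. zn_group_ring_fun n c j)) / real n)"
proof -
  have nonzero: "zn_group_ring_fun n c j \<noteq> 0" if "j < n" for j
    using assms that by auto
  have "ln (norm (\<Prod>j<n. zn_group_ring_fun n c j)) = ln (\<Prod>j<n. norm (zn_group_ring_fun n c j))"
    by (simp add: prod_norm)
  also have "\<dots> = (\<Sum>j<n. ln (norm (zn_group_ring_fun n c j)))"
    by (rule ln_prod) (use nonzero in auto)
  finally show ?thesis
    using nonzero by (simp add: mahler_Zn_def)
qed

lemma lehmer_Zn_le_ln_coprime:
  assumes "n > 0" and "N \<ge> 2" and "coprime N n"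
  shows "lehmer_Zn n \<le> ereal (ln (real N) / real n)"
proof -
  let ?c = "zn_geom_coeffs n N"
  have mahler: "mahler_Zn n ?c = ereal (ln (real N) / real n)"
    using assms by (simp add: mahler_Zn_eq_ln_norm_prod prod_zn_group_ring_fun_geom_coeffs)
  then have "mahler_Zn n ?c > 0"
    using assms(1,2) by simp
  then have "lehmer_Zn n \<le> mahler_Zn n ?c"
    unfolding lehmer_Zn_def by (blast intro: Inf_lower)
  then show ?thesis
    by (simp add: mahler)
qed

lemma prime_rho:
  assumes "n > 0"
  shows "prime (rho n)" and "coprime (rho n) n"
proof -
  obtain q :: nat where "prime q" "n < q"
    using bigger_prime by blast
  then have "prime q \<and> \<not> q dvd n"
    using assms by (auto dest: dvd_imp_le)
  then have "prime (rho n) \<and> \<not> rho n dvd n"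
    unfolding rho_def by (rule LeastI)
  then show "prime (rho n)" and "coprime (rho n) n"
    by (auto simp: prime_imp_coprime)
qed

theorem theorem4p6:
  fixes n :: nat
  assumes "n \<ge> 2"
  shows "lehmer_Zn n \<le> ereal (ln (real (rho n)) / real n)"
proof -
  have "n > 0"
    using assms by simp
  then show ?thesis
    using lehmer_Zn_le_ln_coprime prime_rho prime_ge_2_nat by blast
qed

end
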